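(* Let $m,n\geq1$ and let $\lambda,\mu\in\Lambda_m^n$ be two distinct weights with $|\lambda|\leq|\mu|$. Then: (1) there is no path of length $2$ in $\Gamma_m^n$ between $e_\lambda$ and $e_\mu$ passing through a vertex $e_\nu$ with $|\nu|=|\lambda|$ or $|\nu|=|\mu|$; (2) the set of length-$2$ paths between $e_\lambda$ and $e_\mu$ passing through vertices $e_\nu$ with $|\nu|<|\lambda|$ contains at most one element; (3) the set of length-$2$ paths between $e_\lambda$ and $e_\mu$ passing through vertices $e_\nu$ with $|\nu|>|\mu|$ contains at most one element.
   Context: A weight of type $(m,n)$ is a word $\lambda=\lambda_1\cdots\lambda_{m+n}$ in $\vee$ ("down") and $\wedge$ ("up") with $m$ letters $\vee$ and $n$ letters $\wedge$; $\Lambda_m^n$ is the set of weights. The height of $\lambda$ is $|\lambda|=\sum_{i:\lambda_i=\vee}\#\{j<i:\lambda_j=\wedge\}$. For $\lambda\in\Lambda_m^n$ the cups of $\underline\lambda$ are obtained by repeatedly pairing a $\vee$ with a $\wedge$ that are neighbours ($\vee$ on the left), ignoring positions already paired (drawn as nested non-crossing lower semicircles on a horizontal line); mirroring each cup above the line gives the closed circles of the degree-zero arc diagram $e_\lambda$. $\Gamma_m^n$ is the simple undirected graph with vertex set $\{e_\lambda\}_{\lambda\in\Lambda_m^n}$ and an edge between $e_\lambda$ and $e_\mu$ if one of $\lambda,\mu$ is obtained from the other by exchanging the labels at the two endpoints of one cup (i.e. of a $\vee\cdots\wedge$ pair on a single circle of $e_\lambda$, resp. $e_\mu$). A path of length $2$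 between $e_\lambda$ and $e_\mu$ through $e_\nu$ means $e_\nu$ is adjacent to both. *)

theory Defs
  imports Main
begin

text \<open>A weight is a word in down (True) and up (False); positions are 0-based.\<close>
type_synonym weight = "bool list"

definition weights :: "nat \<Rightarrow> nat \<Rightarrow> weight set" where
  "weights m n = {w. length w = m + n \<and> length (filter id w) = m}"

definition height :: "weight \<Rightarrow> nat" where
  "height w = (\<Sum>i\<in>{i. i < length w \<and> w ! i}. card {j. j < i \<and> \<not> w ! j})"

definition paired :: "(nat \<times> nat) set \<Rightarrow> nat \<Rightarrow> bool" where
  "paired P k \<longleftrightarrow> (\<exists>a b. (a, b) \<in> P \<and> (k = a \<or> k = b))"

definition cup_step :: "weight \<Rightarrow> (nat \<times> nat) set \<Rightarrow> (nat \<times> nat) set \<Rightarrow> bool" where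
  "cup_step w P Q \<longleftrightarrow> (\<exists>i j. i < j \<and> j < length w \<and> w ! i \<and> \<not> w ! j \<and>
       \<not> paired P i \<and> \<not> paired P j \<and> (\<forall>k. i < k \<and> k < j \<longrightarrow> paired P k) \<and>
       Q = insert (i, j) P)"

definition cup :: "weight \<Rightarrow> nat \<Rightarrow> nat \<Rightarrow> bool" where
  "cup w i j \<longleftrightarrow> (\<exists>P. (cup_step w)\<^sup>*\<^sup>* {} P \<and> \<not> (\<exists>Q. cup_step w P Q) \<and> (i, j) \<in> P)"

definition swap_at :: "weight \<Rightarrow> nat \<Rightarrow> nat \<Rightarrow> weight" where
  "swap_at w i j = w[i := w ! j, j := w ! i]"

text \<open>Edge relation of Gamma (vertices e_w identified with weights w).\<close>
definition adj :: "weight \<Rightarrow> weight \<Rightarrow> bool" where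
  "adj w v \<longleftrightarrow> (\<exists>i j. cup w i j \<and> v = swap_at w i j) \<or> (\<exists>i j. cup v i j \<and> w = swap_at v i j)"

end

(* Read a weight as a lattice path, a down letter being a step +1 and an up letter a step -1.
   A cup (i, j) is then a matched pair: the path rises at i and first returns to that level
   right after j. This description does not depend on the order in which the cup process pairs
   positions, so distinct cups of a weight have disjoint endpoints and never cross.
   Swapping the ends of a cup strictly increases the height, so neighbours in Gamma have different
   heights, and a path lambda - nu - mu through a lower vertex nu comes from two distinct cups (a, b)
   and (c, d) of nu. Then lambda and mu differ exactly at a, b, c, d, lambda having up letters at a, d
   and down letters at b, c; since the cups do not cross there is only one way to pair these four
   positions into cups, which determines nu. Two distinct vertices above both lambda and mu would
   have lambda and mu as two distinct common lower neighbours, so the upper case follows. *)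

theory Submission
  imports Defs
begin

definition level :: "weight \<Rightarrow> nat \<Rightarrow> int" where
  "level w k = int (length (filter id (take k w))) - int (length (filter Not (take k w)))"

lemma level_Suc: "k < length w \<Longrightarrow> level w (Suc k) = level w k + (if w ! k then 1 else -1)"
  by (simp add: level_def take_Suc_conv_app_nth)

definition matched :: "weight \<Rightarrow> nat \<Rightarrow> nat \<Rightarrow> bool" where
  "matched w i j \<longleftrightarrow> i < j \<and> j < length w \<and> w ! i \<and> level w (Suc j) = level w i
     \<and> (\<forall>k. i < k \<and> k \<le> j \<longrightarrow> level w i < level w k)"

lemma matched_up: "matched w i j \<Longrightarrow> \<not> w ! j"
  using level_Suc[of j w] by (auto simp: matched_def)

lemma matched_nested:
  assumes ab: "matched w a b" and cd: "matched w c d" and "a < c" "c \<le> b"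
  shows "d < b"
proof (rule ccontr)
  assume "\<not> d < b"
  have "level w c \<le> level w (Suc b)"
  proof (cases "d = b")
    case False
    then have "c < Suc b" "Suc b \<le> d"
      using \<open>c \<le> b\<close> \<open>\<not> d < b\<close> by auto
    then show ?thesis
      using cd by (auto simp: matched_def order_less_imp_le)
  qed (use cd in \<open>simp add: matched_def\<close>)
  moreover have "level w a < level w c"
    using ab \<open>a < c\<close> \<open>c \<le> b\<close> by (auto simp: matched_def)
  ultimately show False
    using ab by (simp add: matched_def)
qed

lemma matched_left_unique: "matched w i j \<Longrightarrow> matched w i j' \<Longrightarrow> j = j'"
  unfolding matched_def by (metis Suc_leI less_Suc_eq linorder_neqE_nat order_less_irrefl)

lemma matched_right_unique: "matched w i j \<Longrightarrow> matched w i' j \<Longrightarrow> i = i'"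
  by (metis linorder_neqE_nat matched_def matched_nested order_less_imp_le order_less_irrefl)

lemma level_tiled_segment:
  assumes matched: "\<And>a b. (a, b) \<in> P \<Longrightarrow> matched w a b"
    and tiled: "\<And>k. s \<le> k \<Longrightarrow> k < t \<Longrightarrow> \<exists>a b. (a, b) \<in> P \<and> s \<le> a \<and> b < t \<and> (k = a \<or> k = b)"
    and "s \<le> t"
  shows "level w t = level w s \<and> (\<forall>k. s \<le> k \<and> k \<le> t \<longrightarrow> level w s \<le> level w k)"
  using tiled \<open>s \<le> t\<close>
proof (induction "t - s" arbitrary: s rule: less_induct)
  case less
  show ?case
  proof (cases "s = t")
    case False
    then obtain a b where "(a, b) \<in> P" "s \<le> a" "b < t" "s = a \<or> s = b"
      using less.prems by fastforce
    moreover have "a < b"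
      using matched[OF \<open>(a, b) \<in> P\<close>] by (simp add: matched_def)
    ultimately have sb: "(s, b) \<in> P" "s < b" "b < t"
      by auto
    note msb = matched[OF sb(1)]
    have "\<exists>a' b'. (a', b') \<in> P \<and> Suc b \<le> a' \<and> b' < t \<and> (k = a' \<or> k = b')"
      if "Suc b \<le> k" "k < t" for k
    proof -
      have "s \<le> k"
        using that sb by linarith
      then obtain a' b' where ab': "(a', b') \<in> P" "s \<le> a'" "b' < t" "k = a' \<or> k = b'"
        using less.prems(1) \<open>k < t\<close> by blast
      have "a' < b'"
        using matched[OF ab'(1)] by (simp add: matched_def)
      have "b < b'"
        using ab'(4) that \<open>a' < b'\<close> by auto
      have "Suc b \<le> a'"
      proof (rule ccontr)
        assume "\<not> Suc b \<le> a'"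
        show False
        proof (cases "a' = s")
          case True
          then show False
            using matched_left_unique[OF msb, of b'] matched[OF ab'(1)] \<open>b < b'\<close> by simp
        next
          case False
          then show False
            using matched_nested[OF msb matched[OF ab'(1)]] ab'(2) \<open>\<not> Suc b \<le> a'\<close> \<open>b < b'\<close>
            by simp
        qed
      qed
      then show ?thesis
        using ab' by blast
    qed
    then have IH: "level w t = level w (Suc b) \<and> (\<forall>k. Suc b \<le> k \<and> k \<le> t \<longrightarrow> level w (Suc b) \<le> level w k)"
      using less.hyps[of "Suc b"] sb by auto
    have "level w (Suc b) = level w s" "\<And>k. s < k \<Longrightarrow> k \<le> b \<Longrightarrow> level w s < level w k"
      using msb by (auto simp: matched_def)
    then show ?thesis
      using IH by (metis not_less_eq_eq order.order_iff_strict)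
  qed (auto dest: le_antisym)
qed

definition cup_invariant :: "weight \<Rightarrow> (nat \<times> nat) set \<Rightarrow> bool" where
  "cup_invariant w P \<longleftrightarrow> (\<forall>(a, b) \<in> P. matched w a b \<and> (\<forall>k. a < k \<and> k < b \<longrightarrow> paired P k))"

lemma matched_if_enclosing_paired:
  assumes inv: "cup_invariant w P"
    and ij: "i < j" "j < length w" "w ! i" "\<not> w ! j"
    and unpaired: "\<not> paired P i" "\<not> paired P j"
    and enclosed: "\<forall>k. i < k \<and> k < j \<longrightarrow> paired P k"
  shows "matched w i j"
proof -
  have matched: "\<And>a b. (a, b) \<in> P \<Longrightarrow> matched w a b"
    and closed: "\<And>a b k. (a, b) \<in> P \<Longrightarrow> a < k \<Longrightarrow> k < b \<Longrightarrow> paired P k"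
    using inv by (auto simp: cup_invariant_def)
  have "\<exists>a b. (a, b) \<in> P \<and> Suc i \<le> a \<and> b < j \<and> (k = a \<or> k = b)"
    if "Suc i \<le> k" "k < j" for k
  proof -
    have "paired P k"
      using enclosed that by simp
    then obtain a b where ab: "(a, b) \<in> P" "k = a \<or> k = b"
      unfolding paired_def by blast
    have "a < b"
      using matched[OF ab(1)] by (simp add: matched_def)
    have "a \<noteq> i" "b \<noteq> i" "a \<noteq> j" "b \<noteq> j"
      using ab(1) unpaired by (auto simp: paired_def)
    moreover have "\<not> (a < i \<and> i < b)" "\<not> (a < j \<and> j < b)"
      using closed[OF ab(1)] unpaired by blast+
    ultimately have "i < a" "b < j"
      using ab(2) that \<open>a < b\<close> by auto
    then show ?thesis
      using ab by (intro exI[of _ a] exI[of _ b]) auto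
  qed
  then have "level w j = level w (Suc i) \<and> (\<forall>k. i < k \<and> k \<le> j \<longrightarrow> level w (Suc i) \<le> level w k)"
    using level_tiled_segment[of P w "Suc i" j] matched ij(1) by (auto simp: Suc_le_eq)
  moreover have "level w (Suc i) = level w i + 1" "level w (Suc j) = level w j - 1"
    using level_Suc[of i w] level_Suc[of j w] ij by auto
  ultimately show ?thesis
    using ij by (force simp: matched_def)
qed

lemma cup_invariant_step:
  assumes inv: "cup_invariant w P" and step: "cup_step w P Q"
  shows "cup_invariant w Q"
proof -
  obtain i j where ij: "i < j" "j < length w" "w ! i" "\<not> w ! j"
    and unpaired: "\<not> paired P i" "\<not> paired P j"
    and enclosed: "\<forall>k. i < k \<and> k < j \<longrightarrow> paired P k" and Q: "Q = insert (i, j) P"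
    using step unfolding cup_step_def by blast
  have "paired P k \<Longrightarrow> paired Q k" for k
    unfolding Q paired_def by blast
  then show ?thesis
    using inv matched_if_enclosing_paired[OF inv ij unpaired enclosed] enclosed
    unfolding cup_invariant_def Q by blast
qed

lemma cup_matched:
  assumes "cup w i j"
  shows "matched w i j"
proof -
  obtain P where steps: "(cup_step w)\<^sup>*\<^sup>* {} P" and "(i, j) \<in> P"
    using assms unfolding cup_def by blast
  from steps have "cup_invariant w P"
  proof (induction rule: rtranclp_induct)
    case base
    show ?case
      by (simp add: cup_invariant_def)
  next
    case (step P Q)
    then show ?case
      using cup_invariant_step by blast
  qed
  with \<open>(i, j) \<in> P\<close> show ?thesis
    by (auto simp: cup_invariant_def)
qed

lemma cup_endpoints:
  assumes "cup w i j"
  shows "i < j" "j < length w" "w ! i" "\<not> w ! j"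
  using cup_matched[OF assms] matched_up[OF cup_matched[OF assms]] by (auto simp: matched_def)

lemma cups_disjoint_noncrossing:
  assumes ab: "cup w a b" and cd: "cup w c d" and "(a, b) \<noteq> (c, d)"
  shows "a \<noteq> c" "a \<noteq> d" "b \<noteq> c" "b \<noteq> d"
    and "a < c \<Longrightarrow> c < b \<Longrightarrow> d < b" "c < a \<Longrightarrow> a < d \<Longrightarrow> b < d"
  using cup_matched[OF ab] cup_matched[OF cd] cup_endpoints[OF ab] cup_endpoints[OF cd] assms(3)
    matched_left_unique[of w a b d] matched_right_unique[of w a b c]
    matched_nested[of w a b c d] matched_nested[of w c d a b]
  by auto

lemma nth_swap_at:
  assumes "i < length w" "j < length w" "i \<noteq> j"
  shows "swap_at w i j ! p = (if p = i then w ! j else if p = j then w ! i else w ! p)"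
  using assms by (auto simp: swap_at_def nth_list_update)

lemma length_swap_at [simp]: "length (swap_at w i j) = length w"
  by (simp add: swap_at_def)

lemma nth_swap_at_cup:
  "cup w i j \<Longrightarrow> swap_at w i j ! p = (if p = i then False else if p = j then True else w ! p)"
  using nth_swap_at[of i w j p] cup_endpoints[of w i j] by auto

definition inversions :: "weight \<Rightarrow> (nat \<times> nat) set" where
  "inversions w = {(q, p). q < length w \<and> w ! q \<and> p < q \<and> \<not> w ! p}"

lemma finite_inversions: "finite (inversions w)"
  by (rule finite_subset[of _ "{..<length w} \<times> {..<length w}"]) (auto simp: inversions_def)

lemma height_eq_card_inversions: "height w = card (inversions w)"
proof -
  have "inversions w = (SIGMA q:{q. q < length w \<and> w ! q}. {p. p < q \<and> \<not> w ! p})"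
    by (auto simp: inversions_def)
  then show ?thesis
    by (simp add: height_def)
qed

lemma height_swap_at_less:
  assumes ij: "i < j" "j < length w" "w ! i" "\<not> w ! j"
  shows "height w < height (swap_at w i j)"
proof -
  let ?v = "swap_at w i j"
  have v: "?v ! p = (if p = i then False else if p = j then True else w ! p)" for p
    using nth_swap_at[of i w j p] ij by auto
  define f where "f = (\<lambda>(q, p). (if q = i then j else q, if p = j then i else p))"
  have "inj_on f (inversions w)"
    using ij by (auto simp: inj_on_def f_def inversions_def split: if_splits)
  moreover have "f ` inversions w \<subset> inversions ?v"
  proof -
    have "f ` inversions w \<subseteq> inversions ?v"
      using ij by (auto simp: f_def inversions_def v split: if_splits)
    moreover have "(j, i) \<in> inversions ?v - f ` inversions w"
      using ij by (auto simp: f_def inversions_def v split: if_splits)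
    ultimately show ?thesis
      by blast
  qed
  ultimately show ?thesis
    by (metis card_image finite_inversions height_eq_card_inversions psubset_card_mono)
qed

definition cup_swap :: "weight \<Rightarrow> weight \<Rightarrow> bool" where
  "cup_swap w v \<longleftrightarrow> (\<exists>i j. cup w i j \<and> v = swap_at w i j)"

lemma adj_iff_cup_swap: "adj w v \<longleftrightarrow> cup_swap w v \<or> cup_swap v w"
  by (simp add: adj_def cup_swap_def)

lemma cup_swap_height_less: "cup_swap w v \<Longrightarrow> height w < height v"
  unfolding cup_swap_def by (auto intro: height_swap_at_less dest: cup_endpoints)

lemma adj_height_neq: "adj w v \<Longrightarrow> height w \<noteq> height v"
  by (auto simp: adj_iff_cup_swap dest: cup_swap_height_less)

(* (a, b), (c, d) are two cups of a lower vertex; {a, d} and {b, c} are the positions where the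
   two upper vertices differ, split by the letter of the first one. *)
lemma noncrossing_pairs_eq:
  fixes a b c d a' b' c' d' :: nat
  assumes "a < b" "c < d" "a' < b'" "c' < d'" "a \<noteq> d" "b \<noteq> c" "a' \<noteq> d'" "b' \<noteq> c'"
    and "a < c \<Longrightarrow> c < b \<Longrightarrow> d < b" "c < a \<Longrightarrow> a < d \<Longrightarrow> b < d"
    and "a' < c' \<Longrightarrow> c' < b' \<Longrightarrow> d' < b'" "c' < a' \<Longrightarrow> a' < d' \<Longrightarrow> b' < d'"
    and "{a, d} = {a', d'}" "{b, c} = {b', c'}"
  shows "a' = a \<and> b' = b"
  using assms by (auto simp: doubleton_eq_iff elim!: linorder_neqE_nat)

lemma cup_swap_common_lower_unique:
  assumes "cup_swap z x" "cup_swap z y" "cup_swap z' x" "cup_swap z' y" and "x \<noteq> y"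
  shows "z = z'"
proof -
  obtain a b c d where ab: "cup z a b" "x = swap_at z a b" and cd: "cup z c d" "y = swap_at z c d"
    using assms(1,2) unfolding cup_swap_def by blast
  obtain a' b' c' d' where ab': "cup z' a' b'" "x = swap_at z' a' b'"
    and cd': "cup z' c' d'" "y = swap_at z' c' d'"
    using assms(3,4) unfolding cup_swap_def by blast
  have "(a, b) \<noteq> (c, d)" "(a', b') \<noteq> (c', d')"
    using \<open>x \<noteq> y\<close> ab cd ab' cd' by auto
  note z = cups_disjoint_noncrossing[OF ab(1) cd(1) this(1)]
  note z' = cups_disjoint_noncrossing[OF ab'(1) cd'(1) \<open>(a', b') \<noteq> (c', d')\<close>]
  have "{p. x ! p \<and> \<not> y ! p} = {b, c}" "{p. \<not> x ! p \<and> y ! p} = {a, d}"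
    using z(1-4) cup_endpoints[OF ab(1)] cup_endpoints[OF cd(1)]
    by (auto simp: ab(2) cd(2) nth_swap_at_cup[OF ab(1)] nth_swap_at_cup[OF cd(1)])
  moreover have "{p. x ! p \<and> \<not> y ! p} = {b', c'}" "{p. \<not> x ! p \<and> y ! p} = {a', d'}"
    using z'(1-4) cup_endpoints[OF ab'(1)] cup_endpoints[OF cd'(1)]
    by (auto simp: ab'(2) cd'(2) nth_swap_at_cup[OF ab'(1)] nth_swap_at_cup[OF cd'(1)])
  ultimately have "{a, d} = {a', d'}" "{b, c} = {b', c'}"
    by simp_all
  then have "a' = a \<and> b' = b"
    using noncrossing_pairs_eq[OF cup_endpoints(1)[OF ab(1)] cup_endpoints(1)[OF cd(1)]
        cup_endpoints(1)[OF ab'(1)] cup_endpoints(1)[OF cd'(1)] z(2,3) z'(2,3) z(5,6) z'(5,6)]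
    by blast
  with ab' have "cup z' a b" "x = swap_at z' a b"
    by simp_all
  have unswap: "v ! p = (if p = a then True else if p = b then False else x ! p)"
    if "cup v a b" "x = swap_at v a b" for v p
    using that nth_swap_at_cup[OF that(1), of p] cup_endpoints[OF that(1)] by auto
  have "length z = length z'"
    using ab(2) ab'(2) by (metis length_swap_at)
  then show "z = z'"
    using unswap[OF ab] unswap[OF \<open>cup z' a b\<close> \<open>x = swap_at z' a b\<close>] by (simp add: nth_equalityI)
qed

(* Distinct common upper neighbours z, z' of x and y would have x and y as distinct common lower
   neighbours. *)
lemma cup_swap_common_upper_unique:
  assumes "cup_swap x z" "cup_swap y z" "cup_swap x z'" "cup_swap y z'" and "x \<noteq> y"
  shows "z = z'"
  using cup_swap_common_lower_unique[of x z z' y] assms by blast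

lemma card_le_one_if_all_eq: "(\<And>x y. x \<in> A \<Longrightarrow> y \<in> A \<Longrightarrow> x = y) \<Longrightarrow> card A \<le> 1"
  by (cases "finite A") (auto simp: card_le_Suc0_iff_eq)

theorem lemma2p7:
  fixes m n :: nat and l u :: weight
  assumes "m \<ge> 1" and "n \<ge> 1"
    and "l \<in> weights m n" and "u \<in> weights m n" and "l \<noteq> u"
    and "height l \<le> height u"
  shows "\<not> (\<exists>v\<in>weights m n. adj l v \<and> adj v u \<and> (height v = height l \<or> height v = height u))
    \<and> card {v\<in>weights m n. adj l v \<and> adj v u \<and> height v < height l} \<le> 1
    \<and> card {v\<in>weights m n. adj l v \<and> adj v u \<and> height v > height u} \<le> 1"
proof (intro conjI)
  show "\<not> (\<exists>v\<in>weights m n. adj l v \<and> adj v u \<and> (height v = height l \<or> height v = height u))"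
    using adj_height_neq by metis
  have lower: "cup_swap v l \<and> cup_swap v u"
    if "adj l v" "adj v u" "height v < height l" for v
    using that \<open>height l \<le> height u\<close> by (auto simp: adj_iff_cup_swap dest: cup_swap_height_less)
  show "card {v\<in>weights m n. adj l v \<and> adj v u \<and> height v < height l} \<le> 1"
    using lower cup_swap_common_lower_unique \<open>l \<noteq> u\<close> by (intro card_le_one_if_all_eq) blast
  have upper: "cup_swap l v \<and> cup_swap u v"
    if "adj l v" "adj v u" "height v > height u" for v
    using that \<open>height l \<le> height u\<close> by (auto simp: adj_iff_cup_swap dest: cup_swap_height_less)
  show "card {v\<in>weights m n. adj l v \<and> adj v u \<and> height v > height u} \<le> 1"
    using upper cup_swap_common_upper_unique \<open>l \<noteq> u\<close> by (intro card_le_one_if_all_eq) blast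
qed

end
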